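(* Let $\Delta$ be a $k$-shellable simplicial complex and $\sigma$ a face of $\Delta$. Then $\operatorname{lk}_\Delta(\sigma)$ is $k$-shellable.
   Context: $\operatorname{lk}_\Delta(\sigma)=\{G\in\Delta: G\cap\sigma=\emptyset,\ G\cup\sigma\in\Delta\}$. $\langle F_1,\ldots,F_s\rangle$ denotes the simplicial complex with facets $F_1,\dots,F_s$. A simplicial complex $\Gamma$ of dimension $d$ is $k$-shellable ($1\le k\le d+1$) if its facets can be ordered $F_1,\ldots,F_r$ such that for every $j=2,\ldots,r$, $\Gamma_j=\langle F_j\rangle\cap\langle F_1,\ldots,F_{j-1}\rangle$ satisfies (i) $\Gamma_j$ is generated by a nonempty set of faces of $\langle F_j\rangle$ of dimension $|F_j|-k-1$; (ii) if $\Gamma_j$ has more than one facet, then for every two distinct facets $\sigma',\tau'$ of $\Gamma_j$, $F_j\subseteq\sigma'\cup\tau'$. *)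

theory Defs
  imports Main
begin

definition simplicial_complex :: "'a set set \<Rightarrow> bool" where
  "simplicial_complex \<Delta> \<longleftrightarrow> finite \<Delta> \<and> \<Delta> \<noteq> {} \<and> (\<forall>F\<in>\<Delta>. finite F)
     \<and> (\<forall>F\<in>\<Delta>. \<forall>G. G \<subseteq> F \<longrightarrow> G \<in> \<Delta>)"

definition facets :: "'a set set \<Rightarrow> 'a set set" where
  "facets \<Delta> = {F \<in> \<Delta>. \<forall>G\<in>\<Delta>. F \<subseteq> G \<longrightarrow> G = F}"

definition gen :: "'a set set \<Rightarrow> 'a set set" where
  "gen S = {G. \<exists>F\<in>S. G \<subseteq> F}"

definition link :: "'a set set \<Rightarrow> 'a set \<Rightarrow> 'a set set" where
  "link \<Delta> \<sigma> = {G \<in> \<Delta>. G \<inter> \<sigma> = {} \<and> G \<union> \<sigma> \<in> \<Delta>}"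

definition sc_dim :: "'a set set \<Rightarrow> int" where
  "sc_dim \<Delta> = int (Max (card ` \<Delta>)) - 1"

text \<open>k-shellability: an ordering F_1,...,F_r (0-based list here) of the facets such that
  for each j \<ge> 2 the complex \<Gamma>_j = <F_j> \<inter> <F_1,...,F_{j-1}> is generated by a nonempty
  set of faces of F_j of cardinality |F_j| - k (dimension |F_j|-k-1), and any two distinct
  facets of \<Gamma>_j cover F_j.\<close>
definition k_shellable :: "nat \<Rightarrow> 'a set set \<Rightarrow> bool" where
  "k_shellable k \<Delta> \<longleftrightarrow> 1 \<le> k \<and>
    (\<exists>Fs. distinct Fs \<and> set Fs = facets \<Delta> \<and>
      (\<forall>j. 0 < j \<and> j < length Fs \<longrightarrow>
        (let \<Gamma> = gen {Fs ! j} \<inter> gen (set (take j Fs)) in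
          (\<exists>S. S \<noteq> {} \<and> (\<forall>G\<in>S. G \<subseteq> Fs ! j \<and> card G + k = card (Fs ! j)) \<and> \<Gamma> = gen S)
          \<and> (\<forall>a\<in>facets \<Gamma>. \<forall>b\<in>facets \<Gamma>. a \<noteq> b \<longrightarrow> Fs ! j \<subseteq> a \<union> b))))"

end

theory Submission
  imports Defs
begin

text \<open>Links commute with the constructions of a shelling: the link of a generated complex is
  generated by the generators through \<sigma> with \<sigma> removed, and the link of an intersection is the
  intersection of the links. Restricting a shelling order to the facets containing \<sigma> and
  removing \<sigma> from each therefore yields an order of the facets of the link in which every
  complex \<Gamma>_j is the link of the corresponding complex \<Gamma>_i of the original order. Both shelling
  conditions pass to links: generators containing \<sigma> lose |\<sigma>| elements, as does F_i, and
  a \<union> \<sigma> is a facet of \<Gamma>_i whenever a is a facet of its link.\<close>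

definition downward_closed :: "'a set set \<Rightarrow> bool" where
  "downward_closed \<Delta> \<longleftrightarrow> (\<forall>F\<in>\<Delta>. \<forall>G. G \<subseteq> F \<longrightarrow> G \<in> \<Delta>)"

definition generated_in_codim :: "nat \<Rightarrow> 'a set \<Rightarrow> 'a set set \<Rightarrow> bool" where
  "generated_in_codim k F \<Gamma> \<longleftrightarrow>
     (\<exists>S. S \<noteq> {} \<and> (\<forall>G\<in>S. G \<subseteq> F \<and> card G + k = card F) \<and> \<Gamma> = gen S)"

definition facets_cover :: "'a set \<Rightarrow> 'a set set \<Rightarrow> bool" where
  "facets_cover F \<Gamma> \<longleftrightarrow> (\<forall>a\<in>facets \<Gamma>. \<forall>b\<in>facets \<Gamma>. a \<noteq> b \<longrightarrow> F \<subseteq> a \<union> b)"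

definition shelling_order :: "nat \<Rightarrow> 'a set list \<Rightarrow> bool" where
  "shelling_order k Fs \<longleftrightarrow> (\<forall>j. 0 < j \<and> j < length Fs \<longrightarrow>
     (let \<Gamma> = gen {Fs ! j} \<inter> gen (set (take j Fs))
      in generated_in_codim k (Fs ! j) \<Gamma> \<and> facets_cover (Fs ! j) \<Gamma>))"

lemma k_shellable_iff_shelling_order:
  "k_shellable k \<Delta> \<longleftrightarrow> 1 \<le> k \<and> (\<exists>Fs. distinct Fs \<and> set Fs = facets \<Delta> \<and> shelling_order k Fs)"
  unfolding k_shellable_def shelling_order_def generated_in_codim_def facets_cover_def ..

lemma downward_closed_gen: "downward_closed (gen S)"
  unfolding downward_closed_def gen_def by blast

lemma downward_closed_Int:
  "downward_closed A \<Longrightarrow> downward_closed B \<Longrightarrow> downward_closed (A \<inter> B)"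
  unfolding downward_closed_def by blast

lemma simplicial_complex_imp_downward_closed:
  "simplicial_complex \<Delta> \<Longrightarrow> downward_closed \<Delta>"
  unfolding simplicial_complex_def downward_closed_def by blast

lemma link_gen: "link (gen S) \<sigma> = gen ((\<lambda>F. F - \<sigma>) ` {F \<in> S. \<sigma> \<subseteq> F})"
proof (intro set_eqI iffI)
  fix G assume "G \<in> link (gen S) \<sigma>"
  then obtain F where "F \<in> S" "G \<union> \<sigma> \<subseteq> F" "G \<inter> \<sigma> = {}"
    unfolding link_def gen_def by blast
  then have "F - \<sigma> \<in> (\<lambda>F. F - \<sigma>) ` {F \<in> S. \<sigma> \<subseteq> F}" "G \<subseteq> F - \<sigma>"
    by auto
  then show "G \<in> gen ((\<lambda>F. F - \<sigma>) ` {F \<in> S. \<sigma> \<subseteq> F})"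
    unfolding gen_def by blast
next
  fix G assume "G \<in> gen ((\<lambda>F. F - \<sigma>) ` {F \<in> S. \<sigma> \<subseteq> F})"
  then obtain F where "F \<in> S" "\<sigma> \<subseteq> F" "G \<subseteq> F - \<sigma>"
    unfolding gen_def by blast
  then show "G \<in> link (gen S) \<sigma>"
    unfolding link_def gen_def by blast
qed

lemma link_Int: "link (A \<inter> B) \<sigma> = link A \<sigma> \<inter> link B \<sigma>"
  unfolding link_def by blast

lemma union_mem_facets_if_mem_facets_link:
  assumes "downward_closed \<Delta>" and "a \<in> facets (link \<Delta> \<sigma>)"
  shows "a \<union> \<sigma> \<in> facets \<Delta>"
proof -
  have a: "a \<in> link \<Delta> \<sigma>" and max: "\<And>H. H \<in> link \<Delta> \<sigma> \<Longrightarrow> a \<subseteq> H \<Longrightarrow> H = a"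
    using assms(2) unfolding facets_def by auto
  then have "a \<inter> \<sigma> = {}" "a \<union> \<sigma> \<in> \<Delta>"
    unfolding link_def by auto
  moreover have "c = a \<union> \<sigma>" if "c \<in> \<Delta>" "a \<union> \<sigma> \<subseteq> c" for c
  proof -
    have "c - \<sigma> \<in> \<Delta>"
      using assms(1) that(1) unfolding downward_closed_def by blast
    moreover have "(c - \<sigma>) \<union> \<sigma> = c"
      using that(2) by blast
    ultimately have "c - \<sigma> \<in> link \<Delta> \<sigma>"
      using that(1) unfolding link_def by auto
    moreover have "a \<subseteq> c - \<sigma>"
      using that(2) \<open>a \<inter> \<sigma> = {}\<close> by blast
    ultimately have "c - \<sigma> = a"
      by (rule max)
    then show ?thesis
      using that(2) by blast
  qed
  ultimately show ?thesis
    unfolding facets_def by blast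
qed

lemma facets_link:
  assumes "downward_closed \<Delta>"
  shows "facets (link \<Delta> \<sigma>) = (\<lambda>F. F - \<sigma>) ` {F \<in> facets \<Delta>. \<sigma> \<subseteq> F}"
proof
  show "facets (link \<Delta> \<sigma>) \<subseteq> (\<lambda>F. F - \<sigma>) ` {F \<in> facets \<Delta>. \<sigma> \<subseteq> F}"
  proof
    fix a assume a: "a \<in> facets (link \<Delta> \<sigma>)"
    then have "a = (a \<union> \<sigma>) - \<sigma>"
      unfolding facets_def link_def by blast
    with union_mem_facets_if_mem_facets_link[OF assms a]
    show "a \<in> (\<lambda>F. F - \<sigma>) ` {F \<in> facets \<Delta>. \<sigma> \<subseteq> F}"
      by blast
  qed
next
  show "(\<lambda>F. F - \<sigma>) ` {F \<in> facets \<Delta>. \<sigma> \<subseteq> F} \<subseteq> facets (link \<Delta> \<sigma>)"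
  proof clarify
    fix F assume F: "F \<in> facets \<Delta>" "\<sigma> \<subseteq> F"
    moreover have "(F - \<sigma>) \<union> \<sigma> = F"
      using F(2) by blast
    ultimately have "F - \<sigma> \<in> link \<Delta> \<sigma>"
      using assms unfolding facets_def link_def downward_closed_def by auto
    moreover have "H = F - \<sigma>" if "H \<in> link \<Delta> \<sigma>" "F - \<sigma> \<subseteq> H" for H
    proof -
      have "H \<inter> \<sigma> = {}" "H \<union> \<sigma> \<in> \<Delta>" "F \<subseteq> H \<union> \<sigma>"
        using that unfolding link_def by auto
      then show ?thesis
        using F(1) unfolding facets_def by blast
    qed
    ultimately show "F - \<sigma> \<in> facets (link \<Delta> \<sigma>)"
      unfolding facets_def by blast
  qed
qed

lemma generated_in_codim_link:
  assumes "finite F" and "\<sigma> \<in> \<Gamma>" and "generated_in_codim k F \<Gamma>"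
  shows "generated_in_codim k (F - \<sigma>) (link \<Gamma> \<sigma>)"
proof -
  obtain S where S: "\<And>G. G \<in> S \<Longrightarrow> G \<subseteq> F \<and> card G + k = card F" "\<Gamma> = gen S"
    using assms(3) unfolding generated_in_codim_def by blast
  define S' where "S' = (\<lambda>G. G - \<sigma>) ` {G \<in> S. \<sigma> \<subseteq> G}"
  have "S' \<noteq> {}"
    using assms(2) S(2) unfolding S'_def gen_def by blast
  moreover have "G - \<sigma> \<subseteq> F - \<sigma> \<and> card (G - \<sigma>) + k = card (F - \<sigma>)"
    if "G \<in> S" "\<sigma> \<subseteq> G" for G
  proof -
    have "G \<subseteq> F" "card G + k = card F"
      using S(1) that(1) by auto
    have "finite G"
      using \<open>G \<subseteq> F\<close> assms(1) by (rule finite_subset)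
    then have "finite \<sigma>"
      using that(2) by (rule finite_subset[rotated])
    have "card (G - \<sigma>) = card G - card \<sigma>"
      using \<open>finite \<sigma>\<close> that(2) by (rule card_Diff_subset)
    moreover have "card (F - \<sigma>) = card F - card \<sigma>"
      using \<open>finite \<sigma>\<close> that(2) \<open>G \<subseteq> F\<close> by (intro card_Diff_subset) auto
    moreover have "card \<sigma> \<le> card G"
      using \<open>finite G\<close> that(2) by (rule card_mono)
    ultimately show ?thesis
      using \<open>G \<subseteq> F\<close> \<open>card G + k = card F\<close> by auto
  qed
  ultimately show ?thesis
    unfolding generated_in_codim_def S(2) link_gen S'_def[symmetric]
    by (intro exI[of _ S']) (auto simp: S'_def)
qed

lemma facets_cover_link:
  assumes "downward_closed \<Gamma>" and "facets_cover F \<Gamma>"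
  shows "facets_cover (F - \<sigma>) (link \<Gamma> \<sigma>)"
  unfolding facets_cover_def
proof (intro ballI impI)
  fix a b assume ab: "a \<in> facets (link \<Gamma> \<sigma>)" "b \<in> facets (link \<Gamma> \<sigma>)" "a \<noteq> b"
  then have "a \<inter> \<sigma> = {}" "b \<inter> \<sigma> = {}"
    unfolding facets_def link_def by auto
  with ab(3) have "a \<union> \<sigma> \<noteq> b \<union> \<sigma>"
    by blast
  with assms ab(1,2) have "F \<subseteq> (a \<union> \<sigma>) \<union> (b \<union> \<sigma>)"
    unfolding facets_cover_def by (meson union_mem_facets_if_mem_facets_link)
  then show "F - \<sigma> \<subseteq> a \<union> b"
    by blast
qed

lemma ex_nth_filter_eq_nth:
  "j < length (filter P xs) \<Longrightarrow> \<exists>i<length xs. P (xs ! i) \<and> filter P xs ! j = xs ! i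
     \<and> take j (filter P xs) = filter P (take i xs)"
proof (induction xs arbitrary: j)
  case Nil
  then show ?case by simp
next
  case (Cons x xs)
  show ?case
  proof (cases "P x \<and> j = 0")
    case True
    then show ?thesis by (intro exI[of _ 0]) auto
  next
    case False
    define j' where "j' = (if P x then j - 1 else j)"
    have "j' < length (filter P xs)"
      using Cons.prems False unfolding j'_def by auto
    from Cons.IH[OF this] obtain i where "i < length xs" "P (xs ! i)"
      "filter P xs ! j' = xs ! i" "take j' (filter P xs) = filter P (take i xs)"
      by blast
    then show ?thesis
      using False unfolding j'_def
      by (intro exI[of _ "Suc i"]) (cases j; auto)
  qed
qed

lemma shelling_order_link:
  assumes "\<forall>F\<in>set Fs. finite F" and "shelling_order k Fs"
  shows "shelling_order k (map (\<lambda>F. F - \<sigma>) (filter ((\<subseteq>) \<sigma>) Fs))"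
  unfolding shelling_order_def Let_def
proof (intro allI impI)
  fix j
  let ?Ls = "map (\<lambda>F. F - \<sigma>) (filter ((\<subseteq>) \<sigma>) Fs)"
  assume j: "0 < j \<and> j < length ?Ls"
  then obtain i where i: "i < length Fs" "\<sigma> \<subseteq> Fs ! i" "?Ls ! j = Fs ! i - \<sigma>"
    and prefix: "take j (filter ((\<subseteq>) \<sigma>) Fs) = filter ((\<subseteq>) \<sigma>) (take i Fs)"
    using ex_nth_filter_eq_nth[of j "(\<subseteq>) \<sigma>" Fs] by auto
  define \<Gamma> where "\<Gamma> = gen {Fs ! i} \<inter> gen (set (take i Fs))"
  \<comment> \<open>As j > 0, some facet preceding F_i in the original order contains \<sigma>; hence \<sigma> \<in> \<Gamma>.\<close>
  obtain E where "E \<in> set (take i Fs)" "\<sigma> \<subseteq> E"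
  proof -
    have "take j (filter ((\<subseteq>) \<sigma>) Fs) \<noteq> []"
      using j by auto
    then show ?thesis
      using that unfolding prefix filter_empty_conv by blast
  qed
  then have "0 < i" "\<sigma> \<in> \<Gamma>"
    using i(2) unfolding \<Gamma>_def gen_def by (auto intro: gr0I)
  have link_\<Gamma>: "link \<Gamma> \<sigma> = gen {?Ls ! j} \<inter> gen (set (take j ?Ls))"
    unfolding \<Gamma>_def link_Int link_gen i(3) take_map prefix using i(2) by (auto simp: gen_def)
  have "generated_in_codim k (Fs ! i) \<Gamma>" "facets_cover (Fs ! i) \<Gamma>"
    using assms(2) \<open>0 < i\<close> i(1) unfolding shelling_order_def \<Gamma>_def by (simp_all add: Let_def)
  moreover have "downward_closed \<Gamma>"
    unfolding \<Gamma>_def by (intro downward_closed_Int downward_closed_gen)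
  ultimately have "generated_in_codim k (Fs ! i - \<sigma>) (link \<Gamma> \<sigma>)"
    "facets_cover (Fs ! i - \<sigma>) (link \<Gamma> \<sigma>)"
    using generated_in_codim_link[OF _ \<open>\<sigma> \<in> \<Gamma>\<close>] facets_cover_link assms(1) i(1) by auto
  then show "generated_in_codim k (?Ls ! j) (gen {?Ls ! j} \<inter> gen (set (take j ?Ls)))
      \<and> facets_cover (?Ls ! j) (gen {?Ls ! j} \<inter> gen (set (take j ?Ls)))"
    unfolding link_\<Gamma> i(3) by simp
qed

theorem theorem2p6:
  fixes \<Delta> :: "'a set set" and \<sigma> :: "'a set" and k :: nat
  assumes "simplicial_complex \<Delta>"
    and "int k \<le> sc_dim \<Delta> + 1"
    and "k_shellable k \<Delta>"
    and "\<sigma> \<in> \<Delta>"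
  shows "k_shellable k (link \<Delta> \<sigma>)"
proof -
  obtain Fs where "1 \<le> k" "distinct Fs" "set Fs = facets \<Delta>" "shelling_order k Fs"
    using assms(3) unfolding k_shellable_iff_shelling_order by blast
  define Ls where "Ls = map (\<lambda>F. F - \<sigma>) (filter ((\<subseteq>) \<sigma>) Fs)"
  have "inj_on (\<lambda>F. F - \<sigma>) (set (filter ((\<subseteq>) \<sigma>) Fs))"
    by (auto simp: inj_on_def)
  with \<open>distinct Fs\<close> have "distinct Ls"
    unfolding Ls_def by (simp add: distinct_map)
  moreover have "set Ls = facets (link \<Delta> \<sigma>)"
    unfolding Ls_def facets_link[OF simplicial_complex_imp_downward_closed[OF assms(1)]]
    using \<open>set Fs = facets \<Delta>\<close> by auto
  moreover have "\<forall>F\<in>set Fs. finite F"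
    using assms(1) \<open>set Fs = facets \<Delta>\<close> unfolding simplicial_complex_def facets_def by auto
  ultimately show ?thesis
    unfolding k_shellable_iff_shelling_order Ls_def
    using \<open>1 \<le> k\<close> shelling_order_link \<open>shelling_order k Fs\<close> by blast
qed

end
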